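(* Let $\alpha\in[0,1]$ be irrational with continued fraction denominators $(q_n)_{n\ge1}$. There exists a set $S_\alpha\subset[0,1]$ of full Lebesgue measure such that for every $\beta\in S_\alpha$, with continued fraction denominators $(q'_n)_{n\ge1}$, there exists a sequence $(n_j)_{j\ge1}$ such that either $\lim_{j\to\infty}M_{n_j}=\infty$ or $\lim_{j\to\infty}N_{n_j}=\infty$, where for each $k$, $\sigma(k)$ is the index with $q'_{\sigma(k)}<q_k<q'_{\sigma(k)+1}$, $\eta(k)$ is the index with $q_{\eta(k)}<q'_k<q_{\eta(k)+1}$, and $$M_k=\max_{r:\,q'_{\sigma(k)}<q_r<q'_{\sigma(k)+1}}\min\Big\{\frac{q_r}{q'_{\sigma(k)}},\frac{q'_{\sigma(k)+1}}{q_r}\Big\},\qquad N_k=\max_{r:\,q_{\eta(k)}<q'_r<q_{\eta(k)+1}}\min\Big\{\frac{q'_r}{q_{\eta(k)}},\frac{q_{\eta(k)+1}}{q'_r}\Big\}.$$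
   Context: Continued fraction denominators of an irrational $\gamma=[c_0;c_1,\dots]$: $q_0=1$, $q_1=c_1$, $q_n=c_nq_{n-1}+q_{n-2}$. *)

theory Defs
  imports "HOL-Analysis.Analysis"
begin

fun cf_rem :: "real \<Rightarrow> nat \<Rightarrow> real" where
  "cf_rem x 0 = x"
| "cf_rem x (Suc n) = 1 / frac (cf_rem x n)"

definition cf_digit :: "real \<Rightarrow> nat \<Rightarrow> real" where
  "cf_digit x n = of_int \<lfloor>cf_rem x n\<rfloor>"

fun cf_denom :: "real \<Rightarrow> nat \<Rightarrow> real" where
  "cf_denom x 0 = 1"
| "cf_denom x (Suc 0) = cf_digit x 1"
| "cf_denom x (Suc (Suc n)) = cf_digit x (Suc (Suc n)) * cf_denom x (Suc n) + cf_denom x n"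

definition cf_sigma_ex :: "(nat \<Rightarrow> real) \<Rightarrow> (nat \<Rightarrow> real) \<Rightarrow> nat \<Rightarrow> bool" where
  "cf_sigma_ex q q' k = (\<exists>s\<ge>1. q' s < q k \<and> q k < q' (Suc s))"

definition cf_sigma :: "(nat \<Rightarrow> real) \<Rightarrow> (nat \<Rightarrow> real) \<Rightarrow> nat \<Rightarrow> nat" where
  "cf_sigma q q' k = (THE s. s \<ge> 1 \<and> q' s < q k \<and> q k < q' (Suc s))"

text \<open>M_k for the pair (q, q'); N_k is obtained by swapping the roles.\<close>
definition cf_M :: "(nat \<Rightarrow> real) \<Rightarrow> (nat \<Rightarrow> real) \<Rightarrow> nat \<Rightarrow> real" where
  "cf_M q q' k = (let s = cf_sigma q q' k in
     Max {min (q r / q' s) (q' (Suc s) / q r) | r. r \<ge> 1 \<and> q' s < q r \<and> q r < q' (Suc s)})"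

end

theory Submission
  imports Defs
begin

text \<open>If the partial quotients of \<alpha> are bounded by C, consecutive denominators of \<alpha> differ by
  a factor of at most C + 1, so some q_r lies deep inside every long enough gap between consecutive
  denominators q'_s < q'_(s+1) of \<beta>, i.e. whenever the partial quotient of \<beta> after q'_s is large.
  Almost every \<beta> has unbounded partial quotients: with respect to the Gauss measure, the numbers
  whose first n partial quotients are at most B have mass at most ((B+1)/(B+2))^n.

  If the partial quotients of \<alpha> are unbounded, there are gaps q_s < q_(s+1) with
  q_(s+1) \<ge> D^3 q_s for every D. If \<beta> has no denominator between D q_s and q_(s+1)/D, the
  best approximation property of the denominators of \<beta> puts \<beta> within D/(q q_(s+1)) of some p/q
  with q \<le> D q_s; these points form a set of measure O(1/D). Hence almost every \<beta> has
  denominators deep inside infinitely many of these gaps.\<close>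

section \<open>Continued fraction denominators\<close>

lemma ex_crossing_index:
  fixes f :: "nat \<Rightarrow> 'a::linorder"
  assumes "f 0 < b" "b \<le> f m" shows "\<exists>n<m. f n < b \<and> b \<le> f (Suc n)"
  using assms(2)
proof (induction m)
  case (Suc m)
  then show ?case by (metis less_SucI lessI not_le)
qed (use assms(1) in simp)

lemma cf_rem_not_Rats: "x \<notin> \<rat> \<Longrightarrow> cf_rem x n \<notin> \<rat>"
  by (induction n) (simp_all flip: inverse_eq_divide)

lemma frac_pos_if_not_Rats: "(y::real) \<notin> \<rat> \<Longrightarrow> 0 < frac y"
  by (metis frac_ge_0 frac_eq_0_iff Ints_subset_Rats order_le_less subsetD)

lemma cf_rem_Suc_gt_1: "x \<notin> \<rat> \<Longrightarrow> 1 < cf_rem x (Suc n)"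
  using frac_pos_if_not_Rats[OF cf_rem_not_Rats] frac_lt_1 by simp

lemma cf_digit_le_cf_rem: "cf_digit x n \<le> cf_rem x n"
  by (simp add: cf_digit_def)

lemma cf_digit_ge_1: "x \<notin> \<rat> \<Longrightarrow> 1 \<le> n \<Longrightarrow> 1 \<le> cf_digit x n"
  using cf_rem_Suc_gt_1[of x "n - 1"] by (cases n) (simp_all add: cf_digit_def)

lemma cf_rem_Suc_eq: "x \<notin> \<rat> \<Longrightarrow> cf_rem x (Suc n) = cf_digit x (Suc n) + 1 / cf_rem x (Suc (Suc n))"
  using frac_pos_if_not_Rats[OF cf_rem_not_Rats, of x "Suc n"]
  by (simp add: cf_digit_def frac_def)

declare cf_rem.simps(2) [simp del]

lemma cf_rem_Suc_0: "0 \<le> x \<Longrightarrow> x < 1 \<Longrightarrow> cf_rem x (Suc 0) = 1 / x"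
  by (simp add: frac_eq cf_rem.simps)

lemma cf_denom_ge_1: "x \<notin> \<rat> \<Longrightarrow> 1 \<le> cf_denom x n"
proof (induction x n rule: cf_denom.induct)
  case (3 x n)
  have "1 * 1 \<le> cf_digit x (Suc (Suc n)) * cf_denom x (Suc n)"
    using 3 cf_digit_ge_1[OF 3(3), of "Suc (Suc n)"] by (intro mult_mono) simp_all
  then show ?case using 3 by simp
qed (simp_all add: cf_digit_ge_1)

lemma cf_denom_Suc_ge: "x \<notin> \<rat> \<Longrightarrow> cf_digit x (Suc n) * cf_denom x n \<le> cf_denom x (Suc n)"
  using cf_denom_ge_1[of x "n - 1"] by (cases n) simp_all

lemma cf_denom_Suc_ge_add_1:
  assumes "x \<notin> \<rat>" "1 \<le> n" shows "cf_denom x n + 1 \<le> cf_denom x (Suc n)"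
proof -
  obtain m where n: "n = Suc m" using assms(2) by (cases n) auto
  have "1 * cf_denom x n \<le> cf_digit x (Suc n) * cf_denom x n"
    using cf_digit_ge_1[OF assms(1), of "Suc n"] cf_denom_ge_1[OF assms(1), of n]
    by (intro mult_right_mono) auto
  then show ?thesis using cf_denom_ge_1[OF assms(1), of m] by (simp add: n)
qed

lemma cf_denom_less:
  assumes "x \<notin> \<rat>" "1 \<le> m" "m < n" shows "cf_denom x m < cf_denom x n"
proof -
  have step: "cf_denom x (Suc i) < cf_denom x (Suc (Suc i))" for i
    using cf_denom_Suc_ge_add_1[OF assms(1), of "Suc i"] by linarith
  have "cf_denom x (Suc (m - 1)) < cf_denom x (Suc (n - 1))"
    using assms(2,3) by (intro lift_Suc_mono_less[of "\<lambda>i. cf_denom x (Suc i)", OF step]) linarith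
  then show ?thesis using assms(2,3) by simp
qed

lemma cf_denom_mono_on: "x \<notin> \<rat> \<Longrightarrow> mono_on {1..} (cf_denom x)"
  by (rule mono_onI) (metis atLeast_iff cf_denom_less order_le_less)

lemma cf_denom_ge_index: "x \<notin> \<rat> \<Longrightarrow> real n \<le> cf_denom x n"
proof (induction n)
  case (Suc n)
  then show ?case
    using cf_denom_Suc_ge_add_1[of x n] cf_denom_ge_1[of x 1] by (cases "n = 0") auto
qed simp

lemma cf_denom_Suc_le: "x \<notin> \<rat> \<Longrightarrow> cf_denom x (Suc n) \<le> (cf_digit x (Suc n) + 1) * cf_denom x n"
proof (cases n)
  case (Suc m)
  assume x: "x \<notin> \<rat>"
  have "cf_denom x m \<le> cf_denom x n"
    using cf_denom_less[OF x, of m n] cf_denom_ge_1[OF x, of n] Suc by (cases "m = 0") auto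
  then show ?thesis by (simp add: Suc algebra_simps)
qed simp

lemma cf_denom_Ints: "cf_denom x n \<in> \<int>"
  by (induction x n rule: cf_denom.induct) (simp_all add: cf_digit_def)

fun cf_numer :: "real \<Rightarrow> nat \<Rightarrow> real" where
  "cf_numer x 0 = 0"
| "cf_numer x (Suc 0) = 1"
| "cf_numer x (Suc (Suc n)) = cf_digit x (Suc (Suc n)) * cf_numer x (Suc n) + cf_numer x n"

lemma cf_numer_Ints: "cf_numer x n \<in> \<int>"
  by (induction x n rule: cf_numer.induct) (simp_all add: cf_digit_def)

lemma cf_numer_denom_det:
  "cf_numer x (Suc n) * cf_denom x n - cf_numer x n * cf_denom x (Suc n) = (-1) ^ n"
proof (induction n)
  case (Suc n)
  then show ?case by (simp add: algebra_simps)
qed simp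

lemma cf_rem_convergent_eq:
  assumes "x \<notin> \<rat>" "0 < x" "x < 1"
  shows "x * (cf_denom x (Suc n) * cf_rem x (Suc (Suc n)) + cf_denom x n)
       = cf_numer x (Suc n) * cf_rem x (Suc (Suc n)) + cf_numer x n"
proof (induction n)
  case 0
  let ?X = "cf_rem x (Suc (Suc 0))"
  have X: "?X > 0" using cf_rem_Suc_gt_1[OF assms(1), of "Suc 0"] by linarith
  have "1 / x = cf_digit x 1 + 1 / ?X"
    using cf_rem_Suc_eq[OF assms(1), of 0] cf_rem_Suc_0[OF less_imp_le[OF assms(2)] assms(3)] by simp
  then have "x * (cf_digit x 1 * ?X + 1) = ?X"
    using assms(2) X by (simp add: field_simps)
  then show ?case by simp
next
  case (Suc n)
  let ?X = "cf_rem x (Suc (Suc n))" and ?Y = "cf_rem x (Suc (Suc (Suc n)))"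
  have Y: "?Y > 0" using cf_rem_Suc_gt_1[OF assms(1)] by (rule order.strict_trans[OF zero_less_one])
  have X: "?X = cf_digit x (Suc (Suc n)) + 1 / ?Y" by (rule cf_rem_Suc_eq[OF assms(1)])
  have "x * (cf_denom x (Suc (Suc n)) * ?Y + cf_denom x (Suc n))
      = ?Y * (x * (cf_denom x (Suc n) * ?X + cf_denom x n))"
    using Y by (simp add: X field_simps)
  also have "\<dots> = ?Y * (cf_numer x (Suc n) * ?X + cf_numer x n)" by (simp only: Suc.IH)
  also have "\<dots> = cf_numer x (Suc (Suc n)) * ?Y + cf_numer x (Suc n)"
    using Y by (simp add: X field_simps)
  finally show ?case .
qed

lemma cf_denom_approx:
  assumes "x \<notin> \<rat>" "0 < x" "x < 1"
  shows "\<exists>p\<in>\<int>. \<bar>cf_denom x n * x - p\<bar> \<le> 1 / cf_denom x (Suc n)"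
proof (cases n)
  case 0
  have "cf_digit x 1 \<le> 1 / x"
    using cf_digit_le_cf_rem[of x 1] cf_rem_Suc_0[OF less_imp_le[OF assms(2)] assms(3)] by simp
  then have "x \<le> 1 / cf_digit x 1"
    using cf_digit_ge_1[OF assms(1), of 1] assms(2) by (simp add: field_simps)
  then show ?thesis using 0 assms(2) by (intro bexI[of _ 0]) simp_all
next
  case (Suc m)
  let ?X = "cf_rem x (Suc (Suc m))"
  let ?p = "cf_numer x (Suc m)" and ?q = "cf_denom x (Suc m)" and ?q' = "cf_denom x m"
  have q: "?q \<ge> 1" "?q' \<ge> 1" using cf_denom_ge_1[OF assms(1)] by auto
  have X: "?X > 1" by (rule cf_rem_Suc_gt_1[OF assms(1)])
  have "?q * ?X > 0" using q X by simp
  then have pos: "?q * ?X + ?q' > 0" using q by linarith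
  have "(?q * x - ?p) * (?q * ?X + ?q') = ?q * (x * (?q * ?X + ?q')) - ?p * (?q * ?X + ?q')"
    by (simp add: algebra_simps)
  also have "\<dots> = - (cf_numer x (Suc m) * ?q' - cf_numer x m * ?q)"
    by (simp only: cf_rem_convergent_eq[OF assms]) (simp add: algebra_simps)
  also have "\<dots> = - ((-1) ^ m)" by (simp only: cf_numer_denom_det)
  finally have "\<bar>?q * x - ?p\<bar> * (?q * ?X + ?q') = 1"
    using pos by (metis abs_minus_cancel abs_mult abs_of_pos power_abs abs_neg_one power_one)
  then have "\<bar>?q * x - ?p\<bar> = 1 / (?q * ?X + ?q')" using pos by (simp add: field_simps)
  also have "\<dots> \<le> 1 / cf_denom x (Suc (Suc m))"
  proof (rule divide_left_mono)
    have "cf_digit x (Suc (Suc m)) * ?q \<le> ?X * ?q"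
      using cf_digit_le_cf_rem q by (intro mult_right_mono) auto
    then show "cf_denom x (Suc (Suc m)) \<le> ?q * ?X + ?q'" by (simp add: mult.commute)
    show "0 < (?q * ?X + ?q') * cf_denom x (Suc (Suc m))"
      using pos cf_denom_ge_1[OF assms(1), of "Suc (Suc m)"] by (intro mult_pos_pos) linarith+
  qed simp
  finally show ?thesis using Suc cf_numer_Ints by blast
qed

lemma ex_large_cf_digit_Suc:
  assumes "\<forall>C. \<exists>k\<ge>1. C < cf_digit x k" shows "\<exists>s\<ge>1. C < cf_digit x (Suc s)"
proof -
  obtain k where k: "1 \<le> k" "max C (cf_digit x 1) < cf_digit x k" using assms by blast
  then have "k \<noteq> 1" by auto
  then show ?thesis using k by (intro exI[of _ "k - 1"]) auto
qed

section \<open>The Gauss map and numbers of bounded type\<close>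

definition gauss_map :: "real \<Rightarrow> real" where
  "gauss_map y = frac (1 / y)"

lemma gauss_map_measurable [measurable]: "gauss_map \<in> borel_measurable borel"
  unfolding gauss_map_def frac_def by measurable

lemma frac_cf_rem: "frac (cf_rem x n) = (gauss_map ^^ n) (frac x)"
  by (induction n) (simp_all add: gauss_map_def cf_rem.simps)

lemma cf_digit_Suc_eq_gauss_map: "cf_digit x (Suc n) = \<lfloor>1 / (gauss_map ^^ n) (frac x)\<rfloor>"
  by (simp add: cf_digit_def cf_rem.simps frac_cf_rem)

definition gauss_branch :: "nat \<Rightarrow> real set" where
  "gauss_branch k = {1 / (real k + 1)<..1 / real k}"

lemma gauss_branch_sets [measurable]: "gauss_branch k \<in> sets borel"
  by (simp add: gauss_branch_def)

lemma mem_gauss_branch_iff: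
  assumes "1 \<le> k" shows "y \<in> gauss_branch k \<longleftrightarrow> 0 < y \<and> \<lfloor>1 / y\<rfloor> = int k"
proof (cases "0 < y")
  case True
  then have "y \<in> gauss_branch k \<longleftrightarrow> real k \<le> 1 / y \<and> 1 / y < real k + 1"
    using assms by (auto simp: gauss_branch_def field_simps)
  then show ?thesis using True by (simp add: floor_eq_iff)
next
  case False
  have "0 < 1 / (real k + 1)" by simp
  then have "y \<notin> gauss_branch k" using False unfolding gauss_branch_def greaterThanAtMost_iff by linarith
  then show ?thesis using False by simp
qed

lemma gauss_map_on_branch:
  "1 \<le> k \<Longrightarrow> y \<in> gauss_branch k \<Longrightarrow> gauss_map y = 1 / y - real k"
  by (simp add: mem_gauss_branch_iff gauss_map_def frac_def)

lemma mem_gauss_branch_floor: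
  assumes "0 < y" "y \<le> 1"
  shows "1 \<le> nat \<lfloor>1 / y\<rfloor>" "y \<in> gauss_branch (nat \<lfloor>1 / y\<rfloor>)"
proof -
  have "1 \<le> \<lfloor>1 / y\<rfloor>" using assms by simp
  then show k: "1 \<le> nat \<lfloor>1 / y\<rfloor>" using nat_mono by fastforce
  show "y \<in> gauss_branch (nat \<lfloor>1 / y\<rfloor>)"
    using assms k by (subst mem_gauss_branch_iff) auto
qed

text \<open>Up to the factor ln 2, this is the Gauss measure, the invariant measure of the Gauss map.\<close>

definition gauss_mass :: "real set \<Rightarrow> ennreal" where
  "gauss_mass E = (\<integral>\<^sup>+y. ennreal (indicator E y * indicator {0..1} y / (1 + y)) \<partial>lborel)"

lemma nn_integral_inverse_branch_subst:
  fixes k :: real and h :: "real \<Rightarrow> real"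
  assumes k: "k \<ge> 1" and [measurable]: "h \<in> borel_measurable borel"
  shows "(\<integral>\<^sup>+y. ennreal (h (1 / y - k) * indicator {1 / (k + 1)..1 / k} y) \<partial>lborel)
       = (\<integral>\<^sup>+t. ennreal (h t / (k + t)\<^sup>2 * indicator {0..1} t) \<partial>lborel)"
proof -
  \<comment> \<open>The decreasing substitution t = 1/y - k is split into the increasing u = k + 1 - 1/y,
    as required by nn_integral_substitution, and the reflection t = 1 - u.\<close>
  define g where "g y = k + 1 - 1 / y" for y :: real
  define F where "F u = h (1 - u) / (k + 1 - u)\<^sup>2" for u :: real
  have [measurable]: "F \<in> borel_measurable borel" unfolding F_def by measurable
  have pos: "y > 0" if "y \<in> {1 / (k + 1)..1 / k}" for y
    using that k by (smt (verit) atLeastAtMost_iff divide_pos_pos)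
  have "(\<integral>\<^sup>+u. F u * indicator {g (1 / (k + 1))..g (1 / k)} u \<partial>lborel) =
        (\<integral>\<^sup>+y. F (g y) * (1 / y\<^sup>2) * indicator {1 / (k + 1)..1 / k} y \<partial>lborel)"
  proof (rule nn_integral_substitution)
    show "(g has_real_derivative 1 / y\<^sup>2) (at y)" if "y \<in> {1 / (k + 1)..1 / k}" for y
      using pos[OF that] unfolding g_def
      by (auto intro!: derivative_eq_intros simp: power2_eq_square field_simps)
    show "continuous_on {1 / (k + 1)..1 / k} (\<lambda>y. 1 / y\<^sup>2)"
      using pos by (intro continuous_intros) auto
    show "1 / (k + 1) \<le> 1 / k" using k by (simp add: field_simps)
  qed (auto simp: set_borel_measurable_def)
  also have "\<dots> = (\<integral>\<^sup>+y. ennreal (h (1 / y - k) * indicator {1 / (k + 1)..1 / k} y) \<partial>lborel)"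
  proof (rule nn_integral_cong)
    fix y :: real
    show "ennreal (F (g y) * (1 / y\<^sup>2) * indicator {1 / (k + 1)..1 / k} y)
        = ennreal (h (1 / y - k) * indicator {1 / (k + 1)..1 / k} y)"
    proof (cases "y \<in> {1 / (k + 1)..1 / k}")
      case True
      then show ?thesis using pos[OF True] unfolding F_def g_def by (simp add: field_simps power2_eq_square)
    qed simp
  qed
  finally have "(\<integral>\<^sup>+y. ennreal (h (1 / y - k) * indicator {1 / (k + 1)..1 / k} y) \<partial>lborel)
      = (\<integral>\<^sup>+u. ennreal (F u * indicator {0..1} u) \<partial>lborel)"
    using k by (simp add: g_def)
  also have "\<dots> = (\<integral>\<^sup>+t. ennreal (F (1 + (-1) * t) * indicator {0..1} (1 + (-1) * t)) \<partial>lborel)"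
    using nn_integral_real_affine[of "\<lambda>u. ennreal (F u * indicator {0..1} u)" "-1" 1] by simp
  also have "\<dots> = (\<integral>\<^sup>+t. ennreal (h t / (k + t)\<^sup>2 * indicator {0..1} t) \<partial>lborel)"
  proof -
    have "indicator {0..1} (1 + (-1) * t) = (indicator {0..1} t :: real)" for t :: real
      by (auto simp: indicator_def)
    moreover have "F (1 + (-1) * t) = h t / (k + t)\<^sup>2" for t unfolding F_def by (simp add: algebra_simps)
    ultimately show ?thesis by simp
  qed
  finally show ?thesis .
qed

lemma nn_integral_gauss_branch:
  assumes k: "1 \<le> k" and [measurable]: "E \<in> sets borel"
  shows "(\<integral>\<^sup>+y. ennreal (indicator E (gauss_map y) * indicator (gauss_branch k) y / (1 + y)) \<partial>lborel)
       = (\<integral>\<^sup>+t. ennreal (indicator E t * indicator {0..1} t / ((real k + t) * (real k + t + 1))) \<partial>lborel)"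
proof -
  define h where "h t = indicator E t * (real k + t) / (real k + t + 1)" for t :: real
  have [measurable]: "h \<in> borel_measurable borel" unfolding h_def by measurable
  have "(\<integral>\<^sup>+y. ennreal (indicator E (gauss_map y) * indicator (gauss_branch k) y / (1 + y)) \<partial>lborel)
      = (\<integral>\<^sup>+y. ennreal (h (1 / y - real k) * indicator {1 / (real k + 1)..1 / real k} y) \<partial>lborel)"
  proof (rule nn_integral_cong_AE)
    show "AE y in lborel. ennreal (indicator E (gauss_map y) * indicator (gauss_branch k) y / (1 + y))
       = ennreal (h (1 / y - real k) * indicator {1 / (real k + 1)..1 / real k} y)"
      using AE_lborel_singleton[of "1 / (real k + 1)"]
    proof eventually_elim
      case (elim y)
      show ?case
      proof (cases "y \<in> gauss_branch k")
        case True
        then have "0 < y" using mem_gauss_branch_iff k by blast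
        then have "(1 / y) / (1 / y + 1) = 1 / (1 + y)" by (simp add: field_simps)
        moreover have "y \<in> {1 / (real k + 1)..1 / real k}" using True by (simp add: gauss_branch_def)
        ultimately show ?thesis
          using True gauss_map_on_branch[OF k True] by (simp add: h_def indicator_def)
      next
        case False
        then show ?thesis using elim by (auto simp: gauss_branch_def)
      qed
    qed
  qed
  also have "\<dots> = (\<integral>\<^sup>+t. ennreal (h t / (real k + t)\<^sup>2 * indicator {0..1} t) \<partial>lborel)"
    using k by (intro nn_integral_inverse_branch_subst) auto
  also have "\<dots> = (\<integral>\<^sup>+t. ennreal (indicator E t * indicator {0..1} t / ((real k + t) * (real k + t + 1))) \<partial>lborel)"
  proof (rule nn_integral_cong)
    fix t :: real
    have "0 < real k + t" if "t \<in> {0..1}" using that k by auto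
    then show "ennreal (h t / (real k + t)\<^sup>2 * indicator {0..1} t)
        = ennreal (indicator E t * indicator {0..1} t / ((real k + t) * (real k + t + 1)))"
      by (cases "t \<in> {0..1}") (simp_all add: h_def power2_eq_square)
  qed
  finally show ?thesis .
qed

fun first_digits_le :: "nat \<Rightarrow> nat \<Rightarrow> real set" where
  "first_digits_le B 0 = UNIV"
| "first_digits_le B (Suc n) = {y. \<lfloor>1 / y\<rfloor> \<le> int B \<and> gauss_map y \<in> first_digits_le B n}"

lemma first_digits_le_sets [measurable]: "first_digits_le B n \<in> sets borel"
proof (induction n)
  case (Suc n)
  note [measurable] = Suc
  show ?case by simp measurable
qed simp

definition all_digits_le :: "nat \<Rightarrow> real set" where
  "all_digits_le B = (\<Inter>n. first_digits_le B n)"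

lemma all_digits_le_sets [measurable]: "all_digits_le B \<in> sets borel"
  unfolding all_digits_le_def by measurable

lemma mem_all_digits_le:
  assumes "\<And>i. \<lfloor>1 / (gauss_map ^^ i) y\<rfloor> \<le> int B" shows "y \<in> all_digits_le B"
proof -
  have "y \<in> first_digits_le B n" for n
    using assms
  proof (induction n arbitrary: y)
    case (Suc n)
    have "gauss_map y \<in> first_digits_le B n"
      by (rule Suc.IH) (metis Suc.prems funpow_Suc_right comp_apply)
    then show ?case using Suc.prems[of 0] by simp
  qed simp
  then show ?thesis by (simp add: all_digits_le_def)
qed

text \<open>Summed over all k \<ge> 1, the branch weights 1/((k+t)(k+t+1)) telescope to 1/(1+t): this is the
  invariance of the Gauss measure.\<close>

lemma sum_gauss_branch_weights_le:
  fixes t :: real assumes "0 \<le> t"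
  shows "(\<Sum>k=1..B. 1 / ((real k + t) * (real k + t + 1))) \<le> (real B + 1) / (real B + 2) * (1 / (1 + t))"
proof -
  have "(\<Sum>k=1..B. 1 / ((real k + t) * (real k + t + 1))) = 1 / (1 + t) - 1 / (real B + 1 + t)"
  proof (induction B)
    case (Suc B)
    have "1 / (real B + 1 + t) - 1 / (real B + 2 + t) = 1 / ((real B + 1 + t) * (real B + 2 + t))"
      using assms by (simp add: field_simps)
    then show ?case using Suc by (simp add: add_ac)
  qed simp
  also have "\<dots> = real B / (real B + 1 + t) * (1 / (1 + t))"
    using assms by (simp add: field_simps)
  also have "\<dots> \<le> (real B + 1) / (real B + 2) * (1 / (1 + t))"
  proof (rule mult_right_mono)
    have "real B * (real B + 2) \<le> (real B + 1) * (real B + 1 + t)"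
      using assms by (simp add: algebra_simps)
    then show "real B / (real B + 1 + t) \<le> (real B + 1) / (real B + 2)"
      using assms by (simp add: divide_simps)
  qed (use assms in simp)
  finally show ?thesis .
qed

lemma gauss_mass_integrand_Suc_le:
  assumes "y \<noteq> 0"
  shows "ennreal (indicator (first_digits_le B (Suc n)) y * indicator {0..1} y / (1 + y))
    \<le> (\<Sum>k=1..B. ennreal (indicator (first_digits_le B n) (gauss_map y) * indicator (gauss_branch k) y / (1 + y)))"
proof (cases "y \<in> first_digits_le B (Suc n) \<and> y \<in> {0..1}")
  case True
  define k where "k = nat \<lfloor>1 / y\<rfloor>"
  have y: "0 < y" "y \<le> 1" using True assms by auto
  have "k \<in> {1..B}" using True mem_gauss_branch_floor[OF y] by (auto simp: k_def)
  moreover have "y \<in> gauss_branch k" using mem_gauss_branch_floor[OF y] by (simp add: k_def)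
  ultimately show ?thesis
    using True by (intro order.trans[OF _ member_le_sum[of k]]) auto
qed auto

lemma gauss_mass_first_digits_le_Suc:
  "gauss_mass (first_digits_le B (Suc n))
     \<le> ennreal ((real B + 1) / (real B + 2)) * gauss_mass (first_digits_le B n)"
proof -
  let ?E = "first_digits_le B n" and ?c = "(real B + 1) / (real B + 2)"
  have "gauss_mass (first_digits_le B (Suc n))
      \<le> (\<integral>\<^sup>+y. (\<Sum>k=1..B. ennreal (indicator ?E (gauss_map y) * indicator (gauss_branch k) y / (1 + y))) \<partial>lborel)"
    unfolding gauss_mass_def
    by (rule nn_integral_mono_AE, rule AE_mp[OF AE_lborel_singleton[of 0]], rule AE_I2)
      (blast intro: gauss_mass_integrand_Suc_le)
  also have "\<dots> = (\<Sum>k=1..B. \<integral>\<^sup>+t. ennreal (indicator ?E t * indicator {0..1} t / ((real k + t) * (real k + t + 1))) \<partial>lborel)"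
    by (simp add: nn_integral_sum nn_integral_gauss_branch)
  also have "\<dots> = (\<integral>\<^sup>+t. ennreal (indicator ?E t * indicator {0..1} t * (\<Sum>k=1..B. 1 / ((real k + t) * (real k + t + 1)))) \<partial>lborel)"
    by (simp add: nn_integral_sum[symmetric] sum_distrib_left, intro nn_integral_cong sum_ennreal)
      (auto simp: indicator_def)
  also have "\<dots> \<le> (\<integral>\<^sup>+t. ennreal ?c * ennreal (indicator ?E t * indicator {0..1} t / (1 + t)) \<partial>lborel)"
  proof (intro nn_integral_mono)
    fix t :: real
    show "ennreal (indicator ?E t * indicator {0..1} t * (\<Sum>k=1..B. 1 / ((real k + t) * (real k + t + 1))))
        \<le> ennreal ?c * ennreal (indicator ?E t * indicator {0..1} t / (1 + t))"
      using sum_gauss_branch_weights_le[of t B]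
      by (cases "t \<in> ?E \<and> t \<in> {0..1}") (auto simp flip: ennreal_mult intro!: ennreal_leI)
  qed
  also have "\<dots> = ennreal ?c * gauss_mass ?E"
    unfolding gauss_mass_def by (rule nn_integral_cmult) measurable
  finally show ?thesis .
qed

lemma gauss_mass_le_1: "gauss_mass E \<le> 1"
proof -
  have "gauss_mass E \<le> (\<integral>\<^sup>+y. indicator {0..1::real} y \<partial>lborel)"
    unfolding gauss_mass_def by (intro nn_integral_mono) (auto simp: indicator_def)
  then show ?thesis by simp
qed

lemma gauss_mass_first_digits_le:
  "gauss_mass (first_digits_le B n) \<le> ennreal (((real B + 1) / (real B + 2)) ^ n)"
proof (induction n)
  case (Suc n)
  have "gauss_mass (first_digits_le B (Suc n))
      \<le> ennreal ((real B + 1) / (real B + 2)) * gauss_mass (first_digits_le B n)"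
    by (rule gauss_mass_first_digits_le_Suc)
  also have "\<dots> \<le> ennreal ((real B + 1) / (real B + 2)) * ennreal (((real B + 1) / (real B + 2)) ^ n)"
    by (rule mult_left_mono[OF Suc]) simp
  finally show ?case by (simp add: ennreal_mult[symmetric])
qed (simp add: gauss_mass_le_1)

lemma gauss_mass_all_digits_le: "gauss_mass (all_digits_le B) = 0"
proof -
  have "gauss_mass (all_digits_le B) \<le> ennreal (((real B + 1) / (real B + 2)) ^ n)" for n
    unfolding gauss_mass_def all_digits_le_def
    by (rule order.trans[OF nn_integral_mono gauss_mass_first_digits_le[unfolded gauss_mass_def]])
       (auto simp: indicator_def intro!: ennreal_leI)
  moreover have "(\<lambda>n. ennreal (((real B + 1) / (real B + 2)) ^ n)) \<longlonglongrightarrow> ennreal 0"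
    by (intro tendsto_ennrealI LIMSEQ_power_zero) auto
  ultimately have "gauss_mass (all_digits_le B) \<le> ennreal 0"
    by (intro LIMSEQ_le_const) auto
  then show ?thesis by simp
qed

lemma null_sets_if_gauss_mass_zero:
  assumes [measurable]: "N \<in> sets borel" and "gauss_mass N = 0"
  shows "N \<inter> {0..1} \<in> null_sets lborel"
proof -
  have "AE y in lborel. ennreal (indicator N y * indicator {0..1} y / (1 + y)) = 0"
    using assms(2) unfolding gauss_mass_def by (subst nn_integral_0_iff_AE[symmetric]) auto
  then have "AE y in lborel. y \<notin> N \<inter> {0..1}"
    by eventually_elim (auto simp: indicator_def ennreal_eq_0_iff)
  then show ?thesis by (subst AE_iff_null_sets) auto
qed

lemma AE_cf_digit_unbounded:
  "AE x in lborel. 0 < x \<longrightarrow> x < 1 \<longrightarrow> (\<forall>C. \<exists>k\<ge>1. C < cf_digit x k)"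
proof -
  have "(\<Union>B. all_digits_le B \<inter> {0..1}) \<in> null_sets lborel"
    by (intro null_sets_UN null_sets_if_gauss_mass_zero gauss_mass_all_digits_le) measurable
  then show ?thesis
  proof (rule AE_mp[OF AE_not_in], intro AE_I2 impI allI)
    fix x C :: real
    assume x: "x \<notin> (\<Union>B. all_digits_le B \<inter> {0..1})" "0 < x" "x < 1"
    show "\<exists>k\<ge>1. C < cf_digit x k"
    proof (rule ccontr)
      assume "\<not> ?thesis"
      then have C: "cf_digit x (Suc i) \<le> C" for i by (auto simp: not_less)
      have "\<lfloor>1 / (gauss_map ^^ i) x\<rfloor> \<le> \<lfloor>C\<rfloor>" for i
        using C[of i] cf_digit_Suc_eq_gauss_map[of x i] x(2,3) by (simp add: frac_eq le_floor_iff)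
      then have "\<lfloor>1 / (gauss_map ^^ i) x\<rfloor> \<le> int (nat \<lfloor>C\<rfloor>)" for i
        by (smt (verit) int_nat_eq)
      then have "x \<in> all_digits_le (nat \<lfloor>C\<rfloor>)" by (rule mem_all_digits_le)
      then show False using x by auto
    qed
  qed
qed

section \<open>Neighbourhoods of rationals\<close>

definition rational_cover :: "real \<Rightarrow> real \<Rightarrow> real \<Rightarrow> real set" where
  "rational_cover X Y D = (\<Union>q\<in>{1..nat \<lfloor>X * D\<rfloor>}. \<Union>p\<in>{0..int q}.
      {of_int p / real q - D / (real q * Y) .. of_int p / real q + D / (real q * Y)})"

lemma rational_cover_sets [measurable]: "rational_cover X Y D \<in> sets borel"
  unfolding rational_cover_def by (intro sets.finite_UN) auto

lemma emeasure_rational_cover_le: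
  assumes "0 \<le> X" "0 \<le> D" "0 < Y"
  shows "emeasure lborel (rational_cover X Y D) \<le> ennreal (4 * X * D\<^sup>2 / Y)"
proof -
  let ?N = "nat \<lfloor>X * D\<rfloor>" and ?r = "\<lambda>q::nat. D / (real q * Y)"
  have "emeasure lborel (rational_cover X Y D)
      \<le> (\<Sum>q=1..?N. \<Sum>p\<in>{0..int q}. emeasure lborel {of_int p / real q - ?r q .. of_int p / real q + ?r q})"
    unfolding rational_cover_def
    by (intro order.trans[OF emeasure_subadditive_finite] sum_mono emeasure_subadditive_finite) auto
  also have "\<dots> = (\<Sum>q=1..?N. ennreal (real (Suc q) * (2 * ?r q)))"
  proof (intro sum.cong refl)
    fix q assume "q \<in> {1..?N}"
    then have "0 \<le> ?r q" using assms by simp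
    then have "(\<Sum>p\<in>{0..int q}. emeasure lborel {of_int p / real q - ?r q .. of_int p / real q + ?r q})
        = of_nat (Suc q) * ennreal (2 * ?r q)"
      by (simp add: nat_add_distrib mult.commute)
    also have "\<dots> = ennreal (real (Suc q) * (2 * ?r q))"
      by (simp only: ennreal_of_nat_eq_real_of_nat ennreal_mult'[OF of_nat_0_le_iff])
    finally show "(\<Sum>p\<in>{0..int q}. emeasure lborel {of_int p / real q - ?r q .. of_int p / real q + ?r q})
        = ennreal (real (Suc q) * (2 * ?r q))" .
  qed
  also have "\<dots> = ennreal (\<Sum>q=1..?N. real (Suc q) * (2 * ?r q))"
    using assms by (intro sum_ennreal) simp
  also have "\<dots> \<le> ennreal (\<Sum>q=1..?N. 4 * D / Y)"
  proof (intro ennreal_leI sum_mono)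
    fix q assume q: "q \<in> {1..?N}"
    have "D * 1 \<le> D * real q" using assms q by (intro mult_left_mono) auto
    then have "real (Suc q) * (2 * D) \<le> real q * (4 * D)" by (simp add: algebra_simps)
    then have "real (Suc q) * (2 * D) / (real q * Y) \<le> real q * (4 * D) / (real q * Y)"
      using assms by (intro divide_right_mono) simp_all
    then show "real (Suc q) * (2 * ?r q) \<le> 4 * D / Y" using q by simp
  qed
  also have "\<dots> \<le> ennreal (4 * X * D\<^sup>2 / Y)"
  proof (rule ennreal_leI)
    have "real ?N * (4 * D / Y) \<le> (X * D) * (4 * D / Y)"
      using assms by (intro mult_right_mono) simp_all
    then show "(\<Sum>q=1..?N. 4 * D / Y) \<le> 4 * X * D\<^sup>2 / Y" by (simp add: power2_eq_square mult_ac)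
  qed
  finally show ?thesis .
qed

lemma cf_denom_in_range_if_not_in_rational_cover:
  assumes x: "x \<notin> \<rat>" "0 < x" "x < 1" and "1 < X * D" "0 < D" "D \<le> Y"
    and "x \<notin> rational_cover X Y D"
  shows "\<exists>m\<ge>1. X * D \<le> cf_denom x m \<and> D * cf_denom x m \<le> Y"
proof (rule ccontr)
  assume none: "\<not> ?thesis"
  have "X * D \<le> cf_denom x (nat \<lceil>X * D\<rceil>)"
    using real_nat_ceiling_ge cf_denom_ge_index[OF x(1)] by (rule order.trans)
  then obtain n where n: "cf_denom x n < X * D" "X * D \<le> cf_denom x (Suc n)"
    using ex_crossing_index[of "cf_denom x"] assms(4) by force
  have "\<not> D * cf_denom x (Suc n) \<le> Y" using none n(2) by (metis One_nat_def Suc_le_mono le0)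
  then have Y: "Y < D * cf_denom x (Suc n)" by simp
  obtain k where k: "cf_denom x n = of_int k" using cf_denom_Ints by (blast elim: Ints_cases)
  define q where "q = nat k"
  have "1 \<le> k" using k cf_denom_ge_1[OF x(1), of n] by simp
  then have q: "cf_denom x n = real q" "1 \<le> q" using k by (simp_all add: q_def)
  obtain z where z: "\<bar>real q * x - of_int z\<bar> \<le> 1 / cf_denom x (Suc n)"
    using cf_denom_approx[OF x, of n] q(1) by (auto elim: Ints_cases)
  have "0 < cf_denom x (Suc n)" using cf_denom_ge_1[OF x(1)] by (rule order.strict_trans2[OF zero_less_one])
  then have "1 / cf_denom x (Suc n) < D / Y"
    using Y assms(5,6) by (simp add: field_simps)
  moreover have "D / Y \<le> 1" using assms(5,6) by simp
  ultimately have close: "\<bar>real q * x - of_int z\<bar> < 1" "\<bar>real q * x - of_int z\<bar> \<le> D / Y"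
    using z by linarith+
  have "q \<in> {1..nat \<lfloor>X * D\<rfloor>}" using n(1) q by (simp add: le_nat_floor)
  moreover have "z \<in> {0..int q}"
  proof -
    have "0 < real q * x" "real q * x < real q" using q(2) x(2,3) by auto
    then have "(-1::real) < of_int z" "of_int z < real q + 1" using close(1) by linarith+
    then show ?thesis by simp
  qed
  moreover have "\<bar>x - of_int z / real q\<bar> \<le> D / (real q * Y)"
  proof -
    have "x - of_int z / real q = (real q * x - of_int z) / real q"
      using q(2) by (simp add: field_simps)
    then have "\<bar>x - of_int z / real q\<bar> = \<bar>real q * x - of_int z\<bar> / real q" by simp
    also have "\<dots> \<le> (D / Y) / real q" using close(2) by (rule divide_right_mono) simp
    finally show ?thesis by (simp add: mult.commute)
  qed
  then have "x \<in> {of_int z / real q - D / (real q * Y) .. of_int z / real q + D / (real q * Y)}"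
    by (simp add: abs_le_iff)
  ultimately have "x \<in> rational_cover X Y D"
    unfolding rational_cover_def by (intro UN_I)
  then show False using assms(7) by contradiction
qed

lemma emeasure_rational_cover_le_inverse:
  assumes "1 \<le> X" "1 \<le> D" "D ^ 3 * X \<le> Y"
  shows "emeasure lborel (rational_cover X Y D) \<le> ennreal (4 / D)"
proof -
  have pos: "0 < D ^ 3 * X" using assms(1,2) by simp
  then have Y: "0 < Y" using assms(3) by linarith
  have "emeasure lborel (rational_cover X Y D) \<le> ennreal (4 * X * D\<^sup>2 / Y)"
    using assms(1,2) Y by (intro emeasure_rational_cover_le) auto
  also have "\<dots> \<le> ennreal (4 * X * D\<^sup>2 / (D ^ 3 * X))"
    using assms(1,2,3) mult_pos_pos[OF Y pos] by (intro ennreal_leI divide_left_mono) auto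
  also have "\<dots> = ennreal (4 / D)"
    using assms(1,2) by (simp add: power2_eq_square power3_eq_cube)
  finally show ?thesis .
qed

lemma cf_denom_deep_in_gap_if_not_in_rational_cover:
  assumes y: "y \<notin> \<rat>" "0 < y" "y < 1" and X: "1 \<le> X" and D: "1 < D" and gap: "D ^ 3 * X \<le> Y"
    and "y \<notin> rational_cover X Y D"
  shows "\<exists>m\<ge>1. X * D \<le> cf_denom y m \<and> D * cf_denom y m \<le> Y"
proof -
  have "X * 1 < X * D" using X D by (intro mult_strict_left_mono) auto
  then have XD: "1 < X * D" using X by linarith
  have "D \<le> D ^ 3" using D by (intro self_le_power) auto
  then have "D \<le> Y" using X D gap by (smt (verit) mult_le_cancel_left1)
  then show ?thesis
    using XD D assms(7) by (intro cf_denom_in_range_if_not_in_rational_cover[OF y]) auto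
qed

lemma liminf_in_null_sets:
  assumes [measurable]: "\<And>j. A j \<in> sets M" and lim: "(\<lambda>j. emeasure M (A j)) \<longlonglongrightarrow> 0"
  shows "(\<Union>J. \<Inter>j\<in>{J..}. A j) \<in> null_sets M"
proof (intro null_sets_UN)
  fix J
  have "emeasure M (\<Inter>j\<in>{J..}. A j) \<le> 0"
  proof (rule LIMSEQ_le_const[OF lim])
    show "\<exists>N. \<forall>n\<ge>N. emeasure M (\<Inter>j\<in>{J..}. A j) \<le> emeasure M (A n)"
      by (intro exI[of _ J] allI impI emeasure_mono) auto
  qed
  then show "(\<Inter>j\<in>{J..}. A j) \<in> null_sets M" by auto
qed

section \<open>Denominators inside gaps\<close>

lemma cf_sigma_eq:
  assumes "mono_on {1..} Q'" "1 \<le> s" "Q' s < Q k" "Q k < Q' (Suc s)"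
  shows "cf_sigma Q Q' k = s"
  unfolding cf_sigma_def
proof (rule the_equality)
  fix t assume t: "1 \<le> t \<and> Q' t < Q k \<and> Q k < Q' (Suc t)"
  have False if "Suc a \<le> b" "1 \<le> a" "Q k < Q' (Suc a)" "Q' b < Q k" for a b
    using mono_onD[OF assms(1), of "Suc a" b] that by auto
  then show "t = s" using t assms(2-4) by (metis not_less_eq_eq le_antisym)
qed (use assms in auto)

lemma cf_M_ge:
  assumes mono: "mono_on {1..} Q'" and grow: "\<And>r. real r \<le> Q r"
    and "1 \<le> s" "1 \<le> k" "0 < Q' s" "1 < D"
    and lower: "D * Q' s \<le> Q k" and upper: "D * Q k \<le> Q' (Suc s)"
  shows "cf_sigma_ex Q Q' k" "D \<le> cf_M Q Q' k"
proof -
  have Qk: "0 < Q k" using assms(5,6) lower by (smt (verit) mult_pos_pos)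
  have between: "Q' s < Q k" "Q k < Q' (Suc s)"
    using assms(5,6) lower upper Qk by (smt (verit) mult_less_cancel_right1)+
  then show "cf_sigma_ex Q Q' k" unfolding cf_sigma_ex_def using assms(3) by blast
  let ?f = "\<lambda>r. min (Q r / Q' s) (Q' (Suc s) / Q r)"
  let ?S = "{?f r | r. r \<ge> 1 \<and> Q' s < Q r \<and> Q r < Q' (Suc s)}"
  have "finite ?S"
  proof (rule finite_subset)
    show "?S \<subseteq> ?f ` {..nat \<lceil>Q' (Suc s)\<rceil>}"
    proof
      fix z assume "z \<in> ?S"
      then obtain r where r: "z = ?f r" "Q r < Q' (Suc s)" by blast
      then have "r \<le> nat \<lceil>Q' (Suc s)\<rceil>" using grow[of r] by linarith
      then show "z \<in> ?f ` {..nat \<lceil>Q' (Suc s)\<rceil>}" using r by auto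
    qed
  qed simp
  moreover have "?f k \<in> ?S" using between assms(4) by blast
  ultimately have "?f k \<le> cf_M Q Q' k"
    unfolding cf_M_def Let_def cf_sigma_eq[where Q = Q, OF mono assms(3) between] by (rule Max_ge)
  moreover have "D \<le> Q k / Q' s" using lower assms(5) by (simp add: pos_le_divide_eq)
  moreover have "D \<le> Q' (Suc s) / Q k" using upper Qk by (simp add: pos_le_divide_eq)
  ultimately show "D \<le> cf_M Q Q' k" by simp
qed

definition cf_M_unbounded :: "(nat \<Rightarrow> real) \<Rightarrow> (nat \<Rightarrow> real) \<Rightarrow> bool" where
  "cf_M_unbounded Q Q' \<longleftrightarrow> (\<exists>n. (\<forall>j. 1 \<le> n j \<and> cf_sigma_ex Q Q' (n j))
     \<and> filterlim (\<lambda>j. cf_M Q Q' (n j)) at_top sequentially)"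

definition hits_deep_gaps :: "(nat \<Rightarrow> real) \<Rightarrow> (nat \<Rightarrow> real) \<Rightarrow> bool" where
  "hits_deep_gaps Q Q' \<longleftrightarrow> (\<forall>D>1. \<exists>s\<ge>1. \<exists>k\<ge>1. D * Q' s \<le> Q k \<and> D * Q k \<le> Q' (Suc s))"

lemma cf_M_unbounded_if_hits_deep_gaps:
  assumes x: "x \<notin> \<rat>" and y: "y \<notin> \<rat>" and hits: "hits_deep_gaps (cf_denom x) (cf_denom y)"
  shows "cf_M_unbounded (cf_denom x) (cf_denom y)"
proof -
  have "\<exists>k. 1 \<le> k \<and> cf_sigma_ex (cf_denom x) (cf_denom y) k \<and> real j \<le> cf_M (cf_denom x) (cf_denom y) k"
    for j
  proof -
    have "1 < real j + 2" by simp
    then obtain s k where sk: "1 \<le> s" "1 \<le> k" "(real j + 2) * cf_denom y s \<le> cf_denom x k"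
      "(real j + 2) * cf_denom x k \<le> cf_denom y (Suc s)"
      using hits unfolding hits_deep_gaps_def by blast
    have "0 < cf_denom y s" using cf_denom_ge_1[OF y, of s] by linarith
    note M = cf_M_ge[OF cf_denom_mono_on[OF y] cf_denom_ge_index[OF x] sk(1,2) this \<open>1 < real j + 2\<close> sk(3,4)]
    show ?thesis using M sk(2) by (intro exI[of _ k]) auto
  qed
  then obtain n where n: "\<And>j. 1 \<le> n j \<and> cf_sigma_ex (cf_denom x) (cf_denom y) (n j)
      \<and> real j \<le> cf_M (cf_denom x) (cf_denom y) (n j)"
    by metis
  have "filterlim (\<lambda>j. cf_M (cf_denom x) (cf_denom y) (n j)) at_top sequentially"
    by (rule filterlim_at_top_mono[OF filterlim_real_sequentially]) (use n in auto)
  then show ?thesis using n unfolding cf_M_unbounded_def by blast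
qed

lemma hits_deep_gaps_if_bounded_digits:
  assumes x: "x \<notin> \<rat>" and C: "\<And>r. 1 \<le> r \<Longrightarrow> cf_digit x r \<le> C"
    and y: "y \<notin> \<rat>" and unbounded: "\<forall>C. \<exists>k\<ge>1. C < cf_digit y k"
  shows "hits_deep_gaps (cf_denom x) (cf_denom y)"
  unfolding hits_deep_gaps_def
proof (intro allI impI)
  fix D :: real assume D: "1 < D"
  have C1: "1 \<le> C" using C[of 1] cf_digit_ge_1[OF x, of 1] by simp
  obtain s where s: "1 \<le> s" "D\<^sup>2 * (C + 1) < cf_digit y (Suc s)"
    using ex_large_cf_digit_Suc[OF unbounded] by blast
  have ys: "1 \<le> cf_denom y s" by (rule cf_denom_ge_1[OF y])
  let ?b = "D * cf_denom y s"
  have "D * 1 \<le> ?b" using D ys by (intro mult_left_mono) auto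
  then have "cf_denom x 0 < ?b" using D by (simp only: cf_denom.simps)
  moreover have "?b \<le> cf_denom x (nat \<lceil>?b\<rceil>)"
    using real_nat_ceiling_ge cf_denom_ge_index[OF x] by (rule order.trans)
  ultimately obtain n where n: "cf_denom x n < ?b" "?b \<le> cf_denom x (Suc n)"
    using ex_crossing_index[of "cf_denom x"] by blast
  have "cf_denom x (Suc n) \<le> (C + 1) * cf_denom x n"
    using C[of "Suc n"] cf_denom_ge_1[OF x, of n]
    by (intro order.trans[OF cf_denom_Suc_le[OF x]] mult_right_mono) auto
  also have "\<dots> \<le> (C + 1) * ?b" using n(1) C1 by (intro mult_left_mono) auto
  finally have "D * cf_denom x (Suc n) \<le> D * ((C + 1) * ?b)" using D by (intro mult_left_mono) auto
  also have "\<dots> = D\<^sup>2 * (C + 1) * cf_denom y s" by (simp add: power2_eq_square mult_ac)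
  also have "\<dots> \<le> cf_digit y (Suc s) * cf_denom y s" using s(2) ys by (intro mult_right_mono) auto
  also have "\<dots> \<le> cf_denom y (Suc s)" by (rule cf_denom_Suc_ge[OF y])
  finally show "\<exists>s\<ge>1. \<exists>k\<ge>1. D * cf_denom y s \<le> cf_denom x k \<and> D * cf_denom x k \<le> cf_denom y (Suc s)"
    using n(2) s(1) by (intro exI[of _ s] exI[of _ "Suc n"]) auto
qed

lemma AE_hits_deep_gaps_if_unbounded_digits:
  assumes x: "x \<notin> \<rat>" and unbounded: "\<forall>C. \<exists>k\<ge>1. C < cf_digit x k"
  shows "AE y in lborel. 0 < y \<longrightarrow> y < 1 \<longrightarrow> y \<notin> \<rat> \<longrightarrow> hits_deep_gaps (cf_denom y) (cf_denom x)"
proof -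
  define D where "D j = real (j + 2)" for j :: nat
  have "\<exists>s\<ge>1. D j ^ 3 < cf_digit x (Suc s)" for j by (rule ex_large_cf_digit_Suc[OF unbounded])
  then obtain s where s: "\<And>j. 1 \<le> s j" "\<And>j. D j ^ 3 < cf_digit x (Suc (s j))" by metis
  define X where "X j = cf_denom x (s j)" for j
  define Y where "Y j = cf_denom x (Suc (s j))" for j
  define U where "U j = rational_cover (X j) (Y j) (D j)" for j
  have X: "1 \<le> X j" for j unfolding X_def by (rule cf_denom_ge_1[OF x])
  have D: "1 < D j" for j by (simp add: D_def)
  have gap: "D j ^ 3 * X j \<le> Y j" for j
  proof -
    have "D j ^ 3 * X j \<le> cf_digit x (Suc (s j)) * X j" using s(2)[of j] X[of j] by simp
    also have "\<dots> \<le> Y j" unfolding X_def Y_def by (rule cf_denom_Suc_ge[OF x])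
    finally show ?thesis .
  qed
  have "(\<lambda>j. emeasure lborel (U j)) \<longlonglongrightarrow> 0"
  proof (rule tendsto_sandwich[OF _ _ tendsto_const])
    show "\<forall>\<^sub>F j in sequentially. emeasure lborel (U j) \<le> ennreal (4 / D j)"
      unfolding U_def by (intro always_eventually allI emeasure_rational_cover_le_inverse X less_imp_le[OF D] gap)
    have "(\<lambda>j. 4 / D j) \<longlonglongrightarrow> 0"
      unfolding D_def using LIMSEQ_ignore_initial_segment[OF lim_const_over_n[of 4], of 2] .
    then show "(\<lambda>j. ennreal (4 / D j)) \<longlonglongrightarrow> 0" using tendsto_ennrealI[of _ 0] by simp
  qed simp
  then have "(\<Union>J. \<Inter>j\<in>{J..}. U j) \<in> null_sets lborel"
    by (rule liminf_in_null_sets[rotated]) (simp add: U_def)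
  then show ?thesis
  proof (rule AE_mp[OF AE_not_in], intro AE_I2 impI)
    fix y assume y: "y \<notin> (\<Union>J. \<Inter>j\<in>{J..}. U j)" "0 < y" "y < 1" "y \<notin> \<rat>"
    show "hits_deep_gaps (cf_denom y) (cf_denom x)"
      unfolding hits_deep_gaps_def
    proof (intro allI impI)
      fix E :: real assume "1 < E"
      have "y \<notin> (\<Inter>j\<in>{nat \<lceil>E\<rceil>..}. U j)" using y(1) by blast
      then obtain j where j: "nat \<lceil>E\<rceil> \<le> j" "y \<notin> U j" by blast
      then have "E \<le> D j" unfolding D_def by linarith
      obtain m where m: "1 \<le> m" "X j * D j \<le> cf_denom y m" "D j * cf_denom y m \<le> Y j"
        using cf_denom_deep_in_gap_if_not_in_rational_cover[OF y(4,2,3) X D gap] j(2) by (auto simp: U_def)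
      have "E * X j \<le> X j * D j" using \<open>E \<le> D j\<close> X[of j] by (simp add: mult.commute)
      moreover have "E * cf_denom y m \<le> D j * cf_denom y m"
        using \<open>E \<le> D j\<close> cf_denom_ge_1[OF y(4), of m] by (intro mult_right_mono) auto
      ultimately show "\<exists>s\<ge>1. \<exists>k\<ge>1. E * cf_denom x s \<le> cf_denom y k \<and> E * cf_denom y k \<le> cf_denom x (Suc s)"
        using m s(1)[of j] unfolding X_def Y_def by (intro exI[of _ "s j"] exI[of _ m]) auto
    qed
  qed
qed

lemma ex_conull_subset_if_AE:
  fixes P :: "real \<Rightarrow> bool"
  assumes "AE x in lborel. 0 < x \<longrightarrow> x < 1 \<longrightarrow> x \<notin> \<rat> \<longrightarrow> P x"
  shows "\<exists>S\<subseteq>{0..1}. {0..1} - S \<in> null_sets lborel \<and> (\<forall>x\<in>S. x \<notin> \<rat> \<and> P x)"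
proof -
  from assms obtain N where "{x \<in> space lborel. \<not> (0 < x \<longrightarrow> x < 1 \<longrightarrow> x \<notin> \<rat> \<longrightarrow> P x)} \<subseteq> N"
    "emeasure lborel N = 0" "N \<in> sets lborel"
    by (rule AE_E)
  then have N: "{x. \<not> (0 < x \<longrightarrow> x < 1 \<longrightarrow> x \<notin> \<rat> \<longrightarrow> P x)} \<subseteq> N" "N \<in> null_sets lborel"
    by auto
  define S where "S = {0..1} - N - \<rat>"
  have "{0..1} - S = {0..1} \<inter> (N \<union> \<rat>)" by (auto simp: S_def)
  also have "\<dots> \<in> null_sets lborel"
    using N(2) countable_imp_null_set_lborel[OF countable_rat]
    by (intro null_set_Int1 null_sets.Un) simp_all
  moreover have "x \<notin> \<rat> \<and> P x" if "x \<in> S" for x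
  proof -
    have "x \<noteq> 0" "x \<noteq> 1" "x \<notin> \<rat>" using that by (auto simp: S_def)
    then show ?thesis using that N(1) by (auto simp: S_def less_le)
  qed
  ultimately show ?thesis by (intro exI[of _ S]) (auto simp: S_def)
qed

theorem theorem8p1:
  fixes \<alpha> :: real
  assumes "\<alpha> \<in> {0..1}" and "\<alpha> \<notin> \<rat>"
  shows "\<exists>S \<subseteq> {0..1}. {0..1} - S \<in> null_sets lborel \<and>
    (\<forall>\<beta>\<in>S. \<beta> \<notin> \<rat> \<and>
      (\<exists>n :: nat \<Rightarrow> nat.
        ((\<forall>j. n j \<ge> 1 \<and> cf_sigma_ex (cf_denom \<alpha>) (cf_denom \<beta>) (n j)) \<and>
         filterlim (\<lambda>j. cf_M (cf_denom \<alpha>) (cf_denom \<beta>) (n j)) at_top sequentially)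
      \<or> ((\<forall>j. n j \<ge> 1 \<and> cf_sigma_ex (cf_denom \<beta>) (cf_denom \<alpha>) (n j)) \<and>
         filterlim (\<lambda>j. cf_M (cf_denom \<beta>) (cf_denom \<alpha>) (n j)) at_top sequentially)))"
proof -
  have "AE \<beta> in lborel. 0 < \<beta> \<longrightarrow> \<beta> < 1 \<longrightarrow> \<beta> \<notin> \<rat> \<longrightarrow>
      hits_deep_gaps (cf_denom \<alpha>) (cf_denom \<beta>) \<or> hits_deep_gaps (cf_denom \<beta>) (cf_denom \<alpha>)"
  proof (cases "\<exists>C. \<forall>r\<ge>1. cf_digit \<alpha> r \<le> C")
    case True
    then obtain C where C: "\<And>r. 1 \<le> r \<Longrightarrow> cf_digit \<alpha> r \<le> C" by blast
    from AE_cf_digit_unbounded show ?thesis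
      by eventually_elim (metis hits_deep_gaps_if_bounded_digits[OF assms(2) C])
  next
    case False
    then have "\<forall>C. \<exists>k\<ge>1. C < cf_digit \<alpha> k" by (auto simp: not_le)
    from AE_hits_deep_gaps_if_unbounded_digits[OF assms(2) this] show ?thesis
      by eventually_elim blast
  qed
  then have "AE \<beta> in lborel. 0 < \<beta> \<longrightarrow> \<beta> < 1 \<longrightarrow> \<beta> \<notin> \<rat> \<longrightarrow>
      cf_M_unbounded (cf_denom \<alpha>) (cf_denom \<beta>) \<or> cf_M_unbounded (cf_denom \<beta>) (cf_denom \<alpha>)"
    by eventually_elim (metis cf_M_unbounded_if_hits_deep_gaps assms(2))
  from ex_conull_subset_if_AE[OF this] obtain S where "S \<subseteq> {0..1}" "{0..1} - S \<in> null_sets lborel"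
    "\<forall>\<beta>\<in>S. \<beta> \<notin> \<rat> \<and> (cf_M_unbounded (cf_denom \<alpha>) (cf_denom \<beta>) \<or> cf_M_unbounded (cf_denom \<beta>) (cf_denom \<alpha>))"
    by blast
  then show ?thesis unfolding cf_M_unbounded_def by (intro exI[of _ S]) blast
qed

end
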